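(* Let $\mathfrak{A}=(Q,\Sigma_I\times\Sigma_O,q_\iota,\delta,\Omega)$ be a deterministic parity automaton and let $k>0$. If Player~$O$ wins the game $\mathcal{G}_k$, then she wins the delay game $\Gamma_{2k-1}(L(\mathfrak{A}))$.
   Context: DPA: $\mathfrak{A}$ has finite state set $Q$, initial state $q_\iota$, transition function $\delta\colon Q\times(\Sigma_I\times\Sigma_O)\to Q$, coloring $\Omega\colon Q\to\mathbb{N}$; a run $q_0q_1\cdots$ ($q_0=q_\iota$, $q_{i+1}=\delta(q_i,\text{$i$-th letter})$) is accepting iff $\limsup_i\Omega(q_i)$ is even; $L(\mathfrak{A})$ is the set of words with accepting run. Delay game $\Gamma_m(L)$: in round $0$ Player~$I$ picks $a_0\cdots a_m\in\Sigma_I$, then Player~$O$ picks $b_0\in\Sigma_O$; in round $i>0$ Player~$I$ picks $a_{m+i}$, then Player~$O$ picks $b_i$. A strategy for $O$ is $\sigma\colon\Sigma_I^*\to\Sigma_O$, an outcome is consistent with it if $b_i=\sigma(a_0\cdots a_{i+m})$ for all $i$, it is winning if all consistent outcomes $\binom{a_0}{b_0}\binom{a_1}{b_1}\cdots$ lie in $L$, and $O$ wins if she has a winning strategy. The game $\mathcal{G}_k$: let $C=\Omega(Q)$. Define $\delta_\mathcal{T}((q,c),\binom{a}{b})=(q',\max\{c,\Omega(q')\})$ with $q'=\delta(q,\binom{a}{b})$, and $\delta_\mathcal{P}\colon 2^{Q\times C}\times\Sigma_I\to 2^{Q\times C}$ by $\delta_\mathcal{P}(S,a)=\bigcup_{(q,c)\in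 S}\bigcup_{b\in\Sigma_O}\{\delta_\mathcal{T}((q,c),\binom{a}{b})\}$, extended to words by $\delta^*_\mathcal{P}(S,\epsilon)=S$, $\delta^*_\mathcal{P}(S,wa)=\delta_\mathcal{P}(\delta^*_\mathcal{P}(S,w),a)$. For nonempty $D\subseteq Q\times C$ and $w\in\Sigma_I^*$ let $r^D_w\colon D\to 2^{Q\times C}$, $r^D_w(q,c)=\delta^*_\mathcal{P}(\{(q,\Omega(q))\},w)$. Let $\mathfrak{R}=\{r^D_w : w\in\Sigma_I^k,\ \emptyset\ne D\subseteq Q\times C\}$ (partial functions $Q\times C\rightharpoonup 2^{Q\times C}$ with domain $\mathrm{dom}(r)$). In $\mathcal{G}_k$, in each round $i\in\mathbb{N}$ Player~$I$ picks $r_i\in\mathfrak{R}$ and then Player~$O$ picks $(q_i,c_i)\in Q\times C$, subject to: $\mathrm{dom}(r_0)=\{(q_\iota,\Omega(q_\iota))\}$, $\mathrm{dom}(r_i)=r_{i-1}(q_{i-1},c_{i-1})$ for $i>0$, and $(q_i,c_i)\in\mathrm{dom}(r_i)$ for all $i$. A play is won by Player~$O$ iff $\limsup_i c_i$ is even. A strategy for $O$ maps each prefix $r_0(q_0,c_0)\cdots r_i$ to a legal $(q_i,c_i)$; she wins $\mathcal{G}_k$ if she has a strategy all of whose consistent plays she wins. *)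

theory Defs
  imports Main "HOL-Library.Extended_Nat" "HOL-Library.Liminf_Limsup"
begin

record ('q, 'a, 'b) dpa =
  init  :: 'q
  delta :: "'q \<Rightarrow> 'a \<times> 'b \<Rightarrow> 'q"
  col   :: "'q \<Rightarrow> nat"

fun run :: "('q, 'a, 'b) dpa \<Rightarrow> (nat \<Rightarrow> 'a \<times> 'b) \<Rightarrow> nat \<Rightarrow> 'q" where
  "run A w 0 = init A"
| "run A w (Suc i) = delta A (run A w i) (w i)"

definition limsup_even :: "(nat \<Rightarrow> nat) \<Rightarrow> bool" where
  "limsup_even f \<longleftrightarrow> (\<exists>n. limsup (\<lambda>i. enat (f i)) = enat n \<and> even n)"

definition lang :: "('q, 'a, 'b) dpa \<Rightarrow> (nat \<Rightarrow> 'a \<times> 'b) set" where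
  "lang A = {w. limsup_even (\<lambda>i. col A (run A w i))}"

definition delay_outcome :: "nat \<Rightarrow> ('a list \<Rightarrow> 'b) \<Rightarrow> (nat \<Rightarrow> 'a) \<Rightarrow> nat \<Rightarrow> 'a \<times> 'b" where
  "delay_outcome m \<sigma> \<alpha> = (\<lambda>i. (\<alpha> i, \<sigma> (map \<alpha> [0..<i + m + 1])))"

definition wins_delay :: "nat \<Rightarrow> (nat \<Rightarrow> 'a \<times> 'b) set \<Rightarrow> bool" where
  "wins_delay m L \<longleftrightarrow> (\<exists>\<sigma> :: 'a list \<Rightarrow> 'b. \<forall>\<alpha>. delay_outcome m \<sigma> \<alpha> \<in> L)"

definition colors :: "('q, 'a, 'b) dpa \<Rightarrow> nat set" where
  "colors A = range (col A)"

definition deltaT :: "('q, 'a, 'b) dpa \<Rightarrow> 'q \<times> nat \<Rightarrow> 'a \<times> 'b \<Rightarrow> 'q \<times> nat" where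
  "deltaT A qc ab = (let q' = delta A (fst qc) ab in (q', max (snd qc) (col A q')))"

definition deltaP :: "('q, 'a, 'b) dpa \<Rightarrow> ('q \<times> nat) set \<Rightarrow> 'a \<Rightarrow> ('q \<times> nat) set" where
  "deltaP A S a = (\<Union>qc\<in>S. \<Union>b\<in>(UNIV :: 'b set). {deltaT A qc (a, b)})"

fun deltaP_star :: "('q, 'a, 'b) dpa \<Rightarrow> ('q \<times> nat) set \<Rightarrow> 'a list \<Rightarrow> ('q \<times> nat) set" where
  "deltaP_star A S w = foldl (deltaP A) S w"

definition rfun :: "('q, 'a, 'b) dpa \<Rightarrow> ('q \<times> nat) set \<Rightarrow> 'a list \<Rightarrow> 'q \<times> nat \<Rightarrow> ('q \<times> nat) set option" where
  "rfun A D w = (\<lambda>qc. if qc \<in> D then Some (deltaP_star A {(fst qc, col A (fst qc))} w) else None)"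

definition Rset :: "('q, 'a, 'b) dpa \<Rightarrow> nat \<Rightarrow> ('q \<times> nat \<Rightarrow> ('q \<times> nat) set option) set" where
  "Rset A k = {rfun A D w | D w. D \<noteq> {} \<and> D \<subseteq> UNIV \<times> colors A \<and> length w = k}"

definition I_legal :: "('q, 'a, 'b) dpa \<Rightarrow> nat \<Rightarrow> (nat \<Rightarrow> 'q \<times> nat \<Rightarrow> ('q \<times> nat) set option)
    \<Rightarrow> (nat \<Rightarrow> 'q \<times> nat) \<Rightarrow> nat \<Rightarrow> bool" where
  "I_legal A k r p i \<longleftrightarrow> r i \<in> Rset A k \<and>
     dom (r i) = (if i = 0 then {(init A, col A (init A))} else the (r (i - 1) (p (i - 1))))"

text \<open>Strategy for O: maps r_0 ... r_i and (q_0,c_0) ... (q_{i-1},c_{i-1}) to (q_i,c_i).\<close>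
type_synonym ('q) gk_strategy =
  "('q \<times> nat \<Rightarrow> ('q \<times> nat) set option) list \<Rightarrow> ('q \<times> nat) list \<Rightarrow> 'q \<times> nat"

definition consistent_upto :: "'q gk_strategy \<Rightarrow> (nat \<Rightarrow> 'q \<times> nat \<Rightarrow> ('q \<times> nat) set option)
    \<Rightarrow> (nat \<Rightarrow> 'q \<times> nat) \<Rightarrow> nat \<Rightarrow> bool" where
  "consistent_upto \<sigma> r p n \<longleftrightarrow> (\<forall>i<n. p i = \<sigma> (map r [0..<Suc i]) (map p [0..<i]))"

definition legal_strategy :: "('q, 'a, 'b) dpa \<Rightarrow> nat \<Rightarrow> 'q gk_strategy \<Rightarrow> bool" where
  "legal_strategy A k \<sigma> \<longleftrightarrow> (\<forall>r p n. (\<forall>i\<le>n. I_legal A k r p i) \<and> consistent_upto \<sigma> r p n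
      \<longrightarrow> \<sigma> (map r [0..<Suc n]) (map p [0..<n]) \<in> dom (r n))"

definition wins_Gk :: "('q, 'a, 'b) dpa \<Rightarrow> nat \<Rightarrow> bool" where
  "wins_Gk A k \<longleftrightarrow> (\<exists>\<sigma>. legal_strategy A k \<sigma> \<and>
     (\<forall>r p. (\<forall>i. I_legal A k r p i) \<and> (\<forall>n. consistent_upto \<sigma> r p n)
        \<longrightarrow> limsup_even (\<lambda>i. snd (p i))))"

end

theory Submission
  imports Defs
begin

text \<open>
  Player O lets Player I play, in round j,
  the function r^D_w for the j-th block w of k input letters, and answers with her strategy.
  Her answer (q_{j+1}, c_{j+1}) lies in r_j(q_j, c_j), so some k output letters drive the
  automaton through block j from q_j to q_{j+1} with maximal colour c_{j+1}; these are the
  letters she plays on block j. Round j+1 needs block j+1, so the letters for block j are known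
  after 2k-1 letters of lookahead. On the resulting run the maximal colour of block j is c_{j+1},
  hence its limsup is that of the simulated play of G_k, which is even.
\<close>

lemma limsup_enat_eq_iff:
  fixes f :: "nat \<Rightarrow> nat"
  shows "limsup (\<lambda>i. enat (f i)) = enat n \<longleftrightarrow>
    (\<forall>\<^sub>F i in sequentially. f i \<le> n) \<and> (\<exists>\<^sub>F i in sequentially. f i = n)"
proof
  assume lim: "limsup (\<lambda>i. enat (f i)) = enat n"
  have "\<forall>\<^sub>F i in sequentially. enat (f i) < enat (Suc n)"
    using Limsup_le_iff[where X="\<lambda>i. enat (f i)" and F=sequentially and C="enat n"] lim
    by (metis enat_ord_simps(2) lessI order_refl)
  then have le: "\<forall>\<^sub>F i in sequentially. f i \<le> n"
    by (simp add: less_Suc_eq_le)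
  have "\<exists>\<^sub>F i in sequentially. f i = n"
  proof (rule ccontr)
    assume "\<not> (\<exists>\<^sub>F i in sequentially. f i = n)"
    then have "\<forall>\<^sub>F i in sequentially. f i \<noteq> n"
      by (simp add: not_frequently)
    with le have less: "\<forall>\<^sub>F i in sequentially. f i < n"
      by eventually_elim simp
    have "n \<noteq> 0"
    proof
      assume "n = 0"
      with less have "\<forall>\<^sub>F i in sequentially. False" by simp
      then show False by simp
    qed
    from less have "\<forall>\<^sub>F i in sequentially. enat (f i) \<le> enat (n - 1)"
      by eventually_elim simp
    then have "limsup (\<lambda>i. enat (f i)) \<le> enat (n - 1)"
      by (rule Limsup_bounded)
    with lim \<open>n \<noteq> 0\<close> show False by simp
  qed
  with le show "(\<forall>\<^sub>F i in sequentially. f i \<le> n) \<and> (\<exists>\<^sub>F i in sequentially. f i = n)" ..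
next
  assume "(\<forall>\<^sub>F i in sequentially. f i \<le> n) \<and> (\<exists>\<^sub>F i in sequentially. f i = n)"
  then have le: "\<forall>\<^sub>F i in sequentially. f i \<le> n" and eq: "\<forall>N. \<exists>i\<ge>N. f i = n"
    by (auto simp: frequently_sequentially)
  have "limsup (\<lambda>i. enat (f i)) \<le> enat n"
    using le by (intro Limsup_bounded) simp
  moreover have "enat n \<le> (SUP i\<in>{N..}. enat (f i))" for N
  proof -
    obtain i where "i \<ge> N" and "f i = n" using eq by blast
    then show ?thesis by (intro SUP_upper2[of i]) auto
  qed
  then have "enat n \<le> limsup (\<lambda>i. enat (f i))"
    unfolding limsup_INF_SUP by (rule INF_greatest)
  ultimately show "limsup (\<lambda>i. enat (f i)) = enat n" by (rule antisym)
qed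

lemma limsup_even_block_Max:
  fixes f g :: "nat \<Rightarrow> nat"
  assumes "0 < k"
    and g: "\<And>j. g (Suc j) = (MAX s\<in>{..k}. f (j * k + s))"
    and "limsup_even g"
  shows "limsup_even f"
proof -
  obtain n where "even n" and "limsup (\<lambda>i. enat (g i)) = enat n"
    using \<open>limsup_even g\<close> unfolding limsup_even_def by blast
  then obtain N where g_le: "\<forall>j\<ge>N. g j \<le> n" and g_eq: "\<forall>J. \<exists>j\<ge>J. g j = n"
    unfolding limsup_enat_eq_iff eventually_sequentially frequently_sequentially by blast
  have f_le: "f (j * k + s) \<le> g (Suc j)" if "s \<le> k" for j s
    using that unfolding g by (intro Max_ge) auto
  have "f i \<le> n" if "i \<ge> N * k" for i
  proof -
    have "N \<le> i div k"
      using div_le_mono[OF that, of k] \<open>0 < k\<close> by simp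
    have "f i = f (i div k * k + i mod k)" by simp
    also have "\<dots> \<le> g (Suc (i div k))"
      using \<open>0 < k\<close> by (intro f_le) (simp add: less_imp_le)
    also have "\<dots> \<le> n"
      using g_le \<open>N \<le> i div k\<close> by simp
    finally show ?thesis .
  qed
  moreover have "\<exists>i\<ge>M. f i = n" for M
  proof -
    obtain J where "J \<ge> Suc M" and "g J = n"
      using g_eq by blast
    then obtain j where "j \<ge> M" and "g (Suc j) = n"
      by (cases J) auto
    have "g (Suc j) \<in> (\<lambda>s. f (j * k + s)) ` {..k}"
      unfolding g by (rule Max_in) auto
    then obtain s where "f (j * k + s) = n"
      using \<open>g (Suc j) = n\<close> by auto
    moreover have "M \<le> j * k + s"
      using \<open>j \<ge> M\<close> \<open>0 < k\<close> by (simp add: le_trans[OF _ trans_le_add1])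
    ultimately show ?thesis by blast
  qed
  ultimately have "limsup (\<lambda>i. enat (f i)) = enat n"
    unfolding limsup_enat_eq_iff eventually_sequentially frequently_sequentially by blast
  with \<open>even n\<close> show ?thesis unfolding limsup_even_def by blast
qed

lemma dom_rfun [simp]: "dom (rfun A D as) = D"
  by (auto simp: rfun_def split: if_splits)

lemma foldl_deltaP_iff:
  "x \<in> foldl (deltaP A) S as \<longleftrightarrow>
     (\<exists>s\<in>S. \<exists>bs. length bs = length as \<and> foldl (deltaT A) s (zip as bs) = x)"
proof (induction as arbitrary: x rule: rev_induct)
  case Nil
  then show ?case by auto
next
  case (snoc a as)
  show ?case
  proof
    assume "x \<in> foldl (deltaP A) S (as @ [a])"
    then obtain y b where y: "y \<in> foldl (deltaP A) S as" and x: "x = deltaT A y (a, b)"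
      by (auto simp: deltaP_def)
    from y snoc.IH obtain s bs where "s \<in> S" "length bs = length as" "foldl (deltaT A) s (zip as bs) = y"
      by blast
    with x show "\<exists>s\<in>S. \<exists>bs. length bs = length (as @ [a]) \<and> foldl (deltaT A) s (zip (as @ [a]) bs) = x"
      by (intro bexI[of _ s] exI[of _ "bs @ [b]"]) auto
  next
    assume "\<exists>s\<in>S. \<exists>bs. length bs = length (as @ [a]) \<and> foldl (deltaT A) s (zip (as @ [a]) bs) = x"
    then obtain s bs' where s: "s \<in> S" and len': "length bs' = Suc (length as)"
      and x': "foldl (deltaT A) s (zip (as @ [a]) bs') = x"
      by auto
    then obtain bs b where "bs' = bs @ [b]"
      by (cases bs' rule: rev_cases) auto
    with len' x' have len: "length bs = length as"
      and x: "foldl (deltaT A) s (zip (as @ [a]) (bs @ [b])) = x"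
      by auto
    have "foldl (deltaT A) s (zip as bs) \<in> foldl (deltaP A) S as"
      using snoc.IH s len by blast
    with x len show "x \<in> foldl (deltaP A) S (as @ [a])"
      by (auto simp: deltaP_def)
  qed
qed

lemma foldl_deltaP_nonempty: "S \<noteq> {} \<Longrightarrow> foldl (deltaP A) S as \<noteq> {}"
proof (induction as arbitrary: S)
  case Nil
  then show ?case by simp
next
  case (Cons a as)
  have "deltaP A S a \<noteq> {}" using Cons.prems by (auto simp: deltaP_def)
  then show ?case using Cons.IH by simp
qed

lemma foldl_deltaP_colors:
  "S \<subseteq> UNIV \<times> colors A \<Longrightarrow> foldl (deltaP A) S as \<subseteq> UNIV \<times> colors A"
proof (induction as arbitrary: S)
  case Nil
  then show ?case by simp
next
  case (Cons a as)
  have "deltaP A S a \<subseteq> UNIV \<times> colors A"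
    using Cons.prems by (force simp: deltaP_def deltaT_def Let_def colors_def max_def)
  then show ?case using Cons.IH by simp
qed

lemma foldl_deltaT_run:
  "foldl (deltaT A) (run A w i, col A (run A w i)) (map w [i..<i + n])
     = (run A w (i + n), MAX s\<in>{..n}. col A (run A w (i + s)))"
proof (induction n)
  case 0
  then show ?case by simp
next
  case (Suc n)
  have "(MAX s\<in>{..Suc n}. col A (run A w (i + s)))
      = max (col A (run A w (i + Suc n))) (MAX s\<in>{..n}. col A (run A w (i + s)))"
    by (simp add: atMost_Suc)
  with Suc show ?case by (simp add: deltaT_def Let_def)
qed

definition block :: "nat \<Rightarrow> (nat \<Rightarrow> 'a) \<Rightarrow> nat \<Rightarrow> 'a list" where
  "block k \<alpha> j = map \<alpha> [j * k..<Suc j * k]"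

lemma length_block [simp]: "length (block k \<alpha> j) = k"
  by (simp add: block_def)

locale Gk_strategy =
  fixes A :: "('q, 'a, 'b) dpa" and k :: nat and \<sigma> :: "'q gk_strategy"
  assumes k_pos: "0 < k" and legal: "legal_strategy A k \<sigma>"
begin

fun history :: "(nat \<Rightarrow> 'a) \<Rightarrow> nat
    \<Rightarrow> ('q \<times> nat \<Rightarrow> ('q \<times> nat) set option) list \<times> ('q \<times> nat) list" where
  "history \<alpha> 0 = ([], [])"
| "history \<alpha> (Suc n) =
    (let rs = fst (history \<alpha> n); ps = snd (history \<alpha> n);
         D = (if n = 0 then {(init A, col A (init A))} else the (last rs (last ps)));
         r = rfun A D (block k \<alpha> n)
     in (rs @ [r], ps @ [\<sigma> (rs @ [r]) ps]))"

definition I_move :: "(nat \<Rightarrow> 'a) \<Rightarrow> nat \<Rightarrow> 'q \<times> nat \<Rightarrow> ('q \<times> nat) set option" where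
  "I_move \<alpha> n = fst (history \<alpha> (Suc n)) ! n"

definition O_move :: "(nat \<Rightarrow> 'a) \<Rightarrow> nat \<Rightarrow> 'q \<times> nat" where
  "O_move \<alpha> n = snd (history \<alpha> (Suc n)) ! n"

lemma length_history: "length (fst (history \<alpha> n)) = n" "length (snd (history \<alpha> n)) = n"
  by (induction n) (simp_all add: Let_def)

lemma history_Suc:
  "history \<alpha> (Suc n) = (fst (history \<alpha> n) @ [I_move \<alpha> n], snd (history \<alpha> n) @ [O_move \<alpha> n])"
  unfolding I_move_def O_move_def by (simp add: Let_def nth_append length_history)

lemma history_eq: "history \<alpha> n = (map (I_move \<alpha>) [0..<n], map (O_move \<alpha>) [0..<n])"
  by (induction n) (simp_all add: history_Suc del: history.simps(2))

lemma I_move_0: "I_move \<alpha> 0 = rfun A {(init A, col A (init A))} (block k \<alpha> 0)"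
  by (simp add: I_move_def Let_def)

lemma I_move_Suc: "I_move \<alpha> (Suc n) = rfun A (the (I_move \<alpha> n (O_move \<alpha> n))) (block k \<alpha> (Suc n))"
proof -
  let ?h = "history \<alpha> (Suc n)"
  have "I_move \<alpha> (Suc n) = rfun A (the (last (fst ?h) (last (snd ?h)))) (block k \<alpha> (Suc n))"
    using history.simps(2)[of \<alpha> "Suc n"] unfolding I_move_def Let_def
    by (simp add: nth_append length_history del: history.simps)
  then show ?thesis by (simp only: history_Suc last_snoc fst_conv snd_conv)
qed

lemma O_move_eq: "O_move \<alpha> n = \<sigma> (map (I_move \<alpha>) [0..<Suc n]) (map (O_move \<alpha>) [0..<n])"
proof -
  have "O_move \<alpha> n = \<sigma> (fst (history \<alpha> (Suc n))) (snd (history \<alpha> n))"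
    unfolding O_move_def by (simp add: Let_def nth_append length_history)
  then show ?thesis by (simp only: history_eq fst_conv snd_conv)
qed

lemma history_local:
  assumes "\<And>m. m < n * k \<Longrightarrow> \<alpha> m = \<beta> m"
  shows "history \<alpha> n = history \<beta> n"
  using assms
proof (induction n)
  case 0
  then show ?case by simp
next
  case (Suc n)
  then have "history \<alpha> n = history \<beta> n" and "block k \<alpha> n = block k \<beta> n"
    by (auto simp: block_def)
  then show ?case by (simp add: Let_def)
qed

lemma I_move_rfun: "I_move \<alpha> n = rfun A (dom (I_move \<alpha> n)) (block k \<alpha> n)"
  by (cases n) (simp_all add: I_move_0 I_move_Suc)

lemma dom_I_move_0: "dom (I_move \<alpha> 0) = {(init A, col A (init A))}"
  by (simp add: I_move_0)

lemma dom_I_move_Suc: "dom (I_move \<alpha> (Suc n)) = the (I_move \<alpha> n (O_move \<alpha> n))"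
  by (simp add: I_move_Suc)

lemma the_I_move:
  "qc \<in> dom (I_move \<alpha> n) \<Longrightarrow>
    the (I_move \<alpha> n qc) = foldl (deltaP A) {(fst qc, col A (fst qc))} (block k \<alpha> n)"
  by (subst I_move_rfun) (simp add: rfun_def)

lemma I_move_legalI:
  assumes "\<And>m. n = Suc m \<Longrightarrow> O_move \<alpha> m \<in> dom (I_move \<alpha> m)"
  shows "I_legal A k (I_move \<alpha>) (O_move \<alpha>) n"
proof -
  have "dom (I_move \<alpha> n) \<noteq> {} \<and> dom (I_move \<alpha> n) \<subseteq> UNIV \<times> colors A"
  proof (cases n)
    case 0
    then show ?thesis by (simp add: dom_I_move_0 colors_def)
  next
    case (Suc m)
    with assms have "dom (I_move \<alpha> n)
        = foldl (deltaP A) {(fst (O_move \<alpha> m), col A (fst (O_move \<alpha> m)))} (block k \<alpha> m)"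
      by (simp add: dom_I_move_Suc the_I_move)
    moreover have "{(fst (O_move \<alpha> m), col A (fst (O_move \<alpha> m)))} \<subseteq> UNIV \<times> colors A"
      by (simp add: colors_def)
    ultimately show ?thesis
      by (simp add: foldl_deltaP_nonempty foldl_deltaP_colors)
  qed
  then have "I_move \<alpha> n \<in> Rset A k"
    unfolding Rset_def by (subst I_move_rfun) (blast intro: length_block)
  moreover have "dom (I_move \<alpha> n) = (if n = 0 then {(init A, col A (init A))}
      else the (I_move \<alpha> (n - 1) (O_move \<alpha> (n - 1))))"
    by (cases n) (simp_all add: dom_I_move_0 dom_I_move_Suc)
  ultimately show ?thesis unfolding I_legal_def by blast
qed

lemma consistent_O_move: "consistent_upto \<sigma> (I_move \<alpha>) (O_move \<alpha>) n"
  unfolding consistent_upto_def using O_move_eq by blast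

lemma O_move_legal: "O_move \<alpha> n \<in> dom (I_move \<alpha> n)"
proof (induction n rule: less_induct)
  case (less n)
  then have "\<forall>i\<le>n. I_legal A k (I_move \<alpha>) (O_move \<alpha>) i"
    by (intro allI impI I_move_legalI) auto
  then show ?case
    using legal consistent_O_move O_move_eq unfolding legal_strategy_def by metis
qed

lemma I_move_legal: "I_legal A k (I_move \<alpha>) (O_move \<alpha>) n"
  using I_move_legalI O_move_legal by blast

lemma O_move_Suc_reachable:
  "O_move \<alpha> (Suc n) \<in> foldl (deltaP A) {(fst (O_move \<alpha> n), col A (fst (O_move \<alpha> n)))} (block k \<alpha> n)"
  using O_move_legal[of \<alpha> "Suc n"] by (simp add: dom_I_move_Suc the_I_move O_move_legal)

definition answers :: "(nat \<Rightarrow> 'a) \<Rightarrow> nat \<Rightarrow> 'b list" where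
  "answers \<alpha> j = (SOME bs. length bs = k \<and>
     foldl (deltaT A) (fst (O_move \<alpha> j), col A (fst (O_move \<alpha> j))) (zip (block k \<alpha> j) bs)
       = O_move \<alpha> (Suc j))"

lemma answers_spec:
  "length (answers \<alpha> j) = k \<and>
   foldl (deltaT A) (fst (O_move \<alpha> j), col A (fst (O_move \<alpha> j))) (zip (block k \<alpha> j) (answers \<alpha> j))
     = O_move \<alpha> (Suc j)"
proof -
  have "\<exists>bs. length bs = k \<and>
     foldl (deltaT A) (fst (O_move \<alpha> j), col A (fst (O_move \<alpha> j))) (zip (block k \<alpha> j) bs)
       = O_move \<alpha> (Suc j)"
    using O_move_Suc_reachable[of \<alpha> j] unfolding foldl_deltaP_iff by auto
  then show ?thesis unfolding answers_def by (rule someI_ex)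
qed

lemma answers_local:
  assumes "\<And>m. m < (j + 2) * k \<Longrightarrow> \<alpha> m = \<beta> m"
  shows "answers \<alpha> j = answers \<beta> j"
proof -
  have "history \<alpha> (j + 2) = history \<beta> (j + 2)"
    using assms by (rule history_local)
  then have "map (O_move \<alpha>) [0..<j + 2] = map (O_move \<beta>) [0..<j + 2]"
    by (simp only: history_eq prod.inject)
  then have "O_move \<alpha> j = O_move \<beta> j" and "O_move \<alpha> (Suc j) = O_move \<beta> (Suc j)"
    by (simp_all add: map_eq_conv)
  moreover have "block k \<alpha> j = block k \<beta> j"
    using assms by (simp add: block_def)
  ultimately show ?thesis unfolding answers_def by simp
qed

text \<open>
  Position i = jk + t of the outcome gets the t-th answer for block j. By \<open>answers_local\<close> this
  only depends on the first (j+2)k \<le> i + 2k letters, i.e. on the prefix actually received, so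
  the junk values of \<open>nth\<close> beyond it are never read.
\<close>
definition delay_strategy :: "'a list \<Rightarrow> 'b" where
  "delay_strategy as = (let i = length as - 2 * k in answers (nth as) (i div k) ! (i mod k))"

definition delay_play :: "(nat \<Rightarrow> 'a) \<Rightarrow> nat \<Rightarrow> 'a \<times> 'b" where
  "delay_play \<alpha> = delay_outcome (2 * k - 1) delay_strategy \<alpha>"

lemma delay_play_block:
  assumes "t < k"
  shows "delay_play \<alpha> (j * k + t) = (\<alpha> (j * k + t), answers \<alpha> j ! t)"
proof -
  let ?as = "map \<alpha> [0..<j * k + t + (2 * k - 1) + 1]"
  have "length ?as - 2 * k = j * k + t"
    using k_pos by simp
  moreover have "(j * k + t) div k = j" and "(j * k + t) mod k = t"
    using assms by simp_all
  moreover have "answers (nth ?as) j = answers \<alpha> j"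
    using k_pos by (intro answers_local) simp
  ultimately show ?thesis
    unfolding delay_play_def delay_outcome_def delay_strategy_def by simp
qed

lemma zip_block_answers:
  "zip (block k \<alpha> j) (answers \<alpha> j) = map (delay_play \<alpha>) [j * k..<j * k + k]"
  by (rule nth_equalityI) (simp_all add: block_def answers_spec delay_play_block)

lemma O_move_Suc_run:
  assumes "run A (delay_play \<alpha>) (j * k) = fst (O_move \<alpha> j)"
  shows "O_move \<alpha> (Suc j) = (run A (delay_play \<alpha>) (j * k + k),
      MAX s\<in>{..k}. col A (run A (delay_play \<alpha>) (j * k + s)))"
proof -
  have "O_move \<alpha> (Suc j) = foldl (deltaT A) (fst (O_move \<alpha> j), col A (fst (O_move \<alpha> j)))
      (zip (block k \<alpha> j) (answers \<alpha> j))"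
    by (simp add: answers_spec)
  also have "\<dots> = foldl (deltaT A) (run A (delay_play \<alpha>) (j * k), col A (run A (delay_play \<alpha>) (j * k)))
      (map (delay_play \<alpha>) [j * k..<j * k + k])"
    by (simp only: assms zip_block_answers)
  also have "\<dots> = (run A (delay_play \<alpha>) (j * k + k),
      MAX s\<in>{..k}. col A (run A (delay_play \<alpha>) (j * k + s)))"
    by (rule foldl_deltaT_run)
  finally show ?thesis .
qed

lemma run_delay_play_block: "run A (delay_play \<alpha>) (j * k) = fst (O_move \<alpha> j)"
proof (induction j)
  case 0
  then show ?case using O_move_legal[of \<alpha> 0] by (simp add: dom_I_move_0)
next
  case (Suc j)
  then show ?case using O_move_Suc_run by (simp add: add.commute)
qed

lemma delay_play_in_lang:
  assumes "limsup_even (\<lambda>i. snd (O_move \<alpha> i))"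
  shows "delay_play \<alpha> \<in> lang A"
proof -
  have block_Max: "snd (O_move \<alpha> (Suc j))
      = (MAX s\<in>{..k}. col A (run A (delay_play \<alpha>) (j * k + s)))" for j
    using O_move_Suc_run[OF run_delay_play_block] by simp
  show ?thesis
    using limsup_even_block_Max[OF k_pos block_Max assms] unfolding lang_def by simp
qed

end

theorem mainTheorem3:
  fixes A :: "('q::finite, 'a::finite, 'b::finite) dpa" and k :: nat
  assumes "k > 0" and "wins_Gk A k"
  shows "wins_delay (2 * k - 1) (lang A)"
proof -
  obtain \<sigma> where legal: "legal_strategy A k \<sigma>" and winning:
    "\<forall>r p. (\<forall>i. I_legal A k r p i) \<and> (\<forall>n. consistent_upto \<sigma> r p n) \<longrightarrow> limsup_even (\<lambda>i. snd (p i))"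
    using assms(2) unfolding wins_Gk_def by blast
  interpret Gk_strategy A k \<sigma>
    using assms(1) legal by unfold_locales
  have "delay_outcome (2 * k - 1) delay_strategy \<alpha> \<in> lang A" for \<alpha>
    using winning I_move_legal consistent_O_move delay_play_in_lang unfolding delay_play_def by blast
  then show ?thesis
    unfolding wins_delay_def by blast
qed

end
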